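(* Let $r\ge 2$ and $t\ge 2$ be integers, and let $n=a(r+t-1)+b$ with integers $a\ge 0$ and $0\le b\le r+t-2$. Suppose there exists a minimal $(r-1)$-$(r+t-1,r,1)$ covering of size $c$. Then $$a\left(\binom{r+t-1}{r}-c\right)+\binom{b}{r}\le ex_r\left(n,Tr(K_{1,t})\right).$$
   Context: For a graph $F$ with vertex set $\{v_1,\dots,v_p\}$ and edge set $\{e_1,\dots,e_q\}$, a hypergraph $\mathcal{H}$ contains $F$ as a trace if there exist distinct vertices $w_1,\dots,w_p\in V(\mathcal{H})$ and distinct edges $f_1,\dots,f_q\in E(\mathcal{H})$ such that whenever $e_i=v_\alpha v_\beta$, we have $f_i\cap\{w_1,\dots,w_p\}=\{w_\alpha,w_\beta\}$. For $r\ge 2$, $ex_r(n,Tr(F))$ denotes the maximum number of edges of an $n$-vertex $r$-uniform hypergraph that does not contain $F$ as a trace. $K_{1,t}$ is the star with $t$ edges. For $v\ge k\ge s$, an $s$-$(v,k,\lambda)$ covering is a collection $\mathcal{C}$ of $k$-subsets (blocks) of a $v$-element set $X$ such that every $s$-subset of $X$ is contained in at least $\lambda$ blocks of $\mathcal{C}$; its size is $|\mathcal{C}|$. A minimal covering is one of minimum possible size. *)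

theory Defs
  imports Main "HOL-Library.Multiset"
begin

text \<open>A graph F is given by a vertex set VF and a set EF of 2-element edges.\<close>
definition contains_trace :: "'a set \<Rightarrow> 'a set set \<Rightarrow> 'v set \<Rightarrow> 'v set set \<Rightarrow> bool" where
  "contains_trace V H VF EF \<longleftrightarrow>
     (\<exists>w f. inj_on w VF \<and> w ` VF \<subseteq> V \<and> inj_on f EF \<and> f ` EF \<subseteq> H \<and>
            (\<forall>e\<in>EF. f e \<inter> w ` VF = w ` e))"

definition star_V :: "nat \<Rightarrow> nat set" where
  "star_V t = {0..t}"
definition star_E :: "nat \<Rightarrow> nat set set" where
  "star_E t = {{0, i} | i. i \<in> {1..t}}"

definition uniform_hypergraph :: "nat \<Rightarrow> nat \<Rightarrow> nat set set \<Rightarrow> bool" where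
  "uniform_hypergraph r n H \<longleftrightarrow> (\<forall>e\<in>H. e \<subseteq> {0..<n} \<and> card e = r)"

definition ex_trace :: "nat \<Rightarrow> nat \<Rightarrow> 'v set \<Rightarrow> 'v set set \<Rightarrow> nat" where
  "ex_trace r n VF EF = Max {card H | H. uniform_hypergraph r n H \<and> \<not> contains_trace {0..<n} H VF EF}"

text \<open>s-(v,k,lambda) covering on ground set X (with |X| = v): a multiset of k-subsets of X
  such that every s-subset of X lies in at least lambda blocks.\<close>
definition is_covering :: "'a set \<Rightarrow> nat \<Rightarrow> nat \<Rightarrow> nat \<Rightarrow> 'a set multiset \<Rightarrow> bool" where
  "is_covering X s k lam C \<longleftrightarrow>
     (\<forall>B\<in>#C. B \<subseteq> X \<and> card B = k) \<and>
     (\<forall>S. S \<subseteq> X \<and> card S = s \<longrightarrow> size (filter_mset (\<lambda>B. S \<subseteq> B) C) \<ge> lam)"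

definition is_minimal_covering :: "'a set \<Rightarrow> nat \<Rightarrow> nat \<Rightarrow> nat \<Rightarrow> 'a set multiset \<Rightarrow> bool" where
  "is_minimal_covering X s k lam C \<longleftrightarrow>
     is_covering X s k lam C \<and> (\<forall>C'. is_covering X s k lam C' \<longrightarrow> size C \<le> size C')"

end

theory Submission
  imports Defs "HOL-Library.Disjoint_Sets"
begin

(* Split {0..<n} into a blocks of r + t - 1 consecutive vertices and a last block of b vertices.
   On each full block take all r-subsets except the blocks of a copy of the covering, on the last
   block all r-subsets. Every edge of a trace of K_{1,t} contains the image w0 of the centre, so the
   trace lives inside one block Y. If W is its vertex set, the edge for a leaf x lies in
   (Y - W) \<union> {w0, x}, which has at most r elements, with equality only if |Y| = r + t - 1; so
   the edge is forced. But the (r - 1)-set (Y - W) \<union> {w0} lies in a covering block, and that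
   block is the forced edge of the leaf it contains, which was removed. *)

definition set_covering :: "'a set \<Rightarrow> nat \<Rightarrow> nat \<Rightarrow> 'a set set \<Rightarrow> bool" where
  "set_covering X s k D \<longleftrightarrow>
     (\<forall>B\<in>D. B \<subseteq> X \<and> card B = k) \<and> (\<forall>S. S \<subseteq> X \<and> card S = s \<longrightarrow> (\<exists>B\<in>D. S \<subseteq> B))"

lemma is_covering_imp_set_covering:
  assumes "is_covering X s k 1 C"
  shows "set_covering X s k (set_mset C)"
  unfolding set_covering_def
proof (intro conjI allI impI)
  show "\<forall>B\<in>set_mset C. B \<subseteq> X \<and> card B = k"
    using assms unfolding is_covering_def by blast
next
  fix S assume "S \<subseteq> X \<and> card S = s"
  then have "size (filter_mset (\<lambda>B. S \<subseteq> B) C) \<ge> 1"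
    using assms unfolding is_covering_def by blast
  then have "filter_mset (\<lambda>B. S \<subseteq> B) C \<noteq> {#}"
    by (metis not_one_le_zero size_empty)
  then obtain B where "B \<in># filter_mset (\<lambda>B. S \<subseteq> B) C"
    by (meson multiset_nonemptyE)
  then show "\<exists>B\<in>set_mset C. S \<subseteq> B" by auto
qed

lemma card_set_mset_le_size: "card (set_mset C) \<le> size C"
  by (metis size_mset_set size_mset_mono mset_set_set_mset_msubset)

lemma set_covering_image:
  assumes g: "bij_betw g X Y" and D: "set_covering X s k D"
  shows "set_covering Y s k ((`) g ` D)"
  unfolding set_covering_def
proof (intro conjI allI impI ballI)
  fix B' assume "B' \<in> (`) g ` D"
  then obtain B where B: "B \<in> D" "B' = g ` B" by blast
  with D have "B \<subseteq> X" "card B = k" unfolding set_covering_def by auto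
  then show "B' \<subseteq> Y" "card B' = k"
    using B g by (auto simp: bij_betw_def card_image[OF inj_on_subset])
next
  fix S assume S: "S \<subseteq> Y \<and> card S = s"
  have inv: "bij_betw (inv_into X g) Y X" using g by (rule bij_betw_inv_into)
  have "inv_into X g ` S \<subseteq> X" "card (inv_into X g ` S) = s"
    using S inv by (auto simp: bij_betw_def card_image[OF inj_on_subset])
  then obtain B where B: "B \<in> D" "inv_into X g ` S \<subseteq> B"
    using D unfolding set_covering_def by blast
  have "g ` inv_into X g ` S = S"
    using S g by (simp add: bij_betw_def image_inv_into_cancel)
  then have "S \<subseteq> g ` B"
    using B(2) by (metis image_mono)
  then show "\<exists>B\<in>(`) g ` D. S \<subseteq> B" using B(1) by blast
qed

(* W is the vertex set of the star and w0 its centre. Edges for different leaves are automatically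
   distinct, since their traces on W differ. *)
definition star_trace_at :: "'a set set \<Rightarrow> 'a set \<Rightarrow> 'a \<Rightarrow> bool" where
  "star_trace_at H W w0 \<longleftrightarrow> w0 \<in> W \<and> (\<forall>x\<in>W - {w0}. \<exists>f\<in>H. f \<inter> W = {w0, x})"

lemma star_trace_atD:
  assumes "star_trace_at H W w0" "x \<in> W - {w0}"
  shows "\<exists>f\<in>H. f \<inter> W = {w0, x}"
  using assms unfolding star_trace_at_def by blast

lemma contains_star_trace_imp_star_trace_at:
  assumes "contains_trace V H (star_V t) (star_E t)"
  obtains W w0 where "W \<subseteq> V" "card W = Suc t" "star_trace_at H W w0"
proof -
  obtain w f where w: "inj_on w {0..t}" "w ` {0..t} \<subseteq> V" and f: "f ` star_E t \<subseteq> H"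
    and trace: "\<forall>e\<in>star_E t. f e \<inter> w ` {0..t} = w ` e"
    using assms unfolding contains_trace_def star_V_def by meson
  have "star_trace_at H (w ` {0..t}) (w 0)"
    unfolding star_trace_at_def
  proof (intro conjI ballI)
    fix x assume x: "x \<in> w ` {0..t} - {w 0}"
    then obtain i where i: "i \<in> {0..t}" "x = w i" by blast
    with x have "i \<in> {1..t}" by (cases "i = 0") auto
    then have "{0, i} \<in> star_E t" unfolding star_E_def by blast
    then show "\<exists>f'\<in>H. f' \<inter> w ` {0..t} = {w 0, x}"
      using f trace i by (intro bexI[of _ "f {0, i}"]) auto
  qed simp
  moreover have "card (w ` {0..t}) = Suc t" using w(1) by (simp add: card_image)
  ultimately show thesis using that w(2) by blast
qed

lemma star_trace_at_UN:
  assumes disj: "disjoint_family_on Y J" and F: "\<And>j. j \<in> J \<Longrightarrow> F j \<subseteq> Pow (Y j)"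
    and star: "star_trace_at (\<Union>j\<in>J. F j) W w0" and nontrivial: "W \<noteq> {w0}"
  obtains j where "j \<in> J" "W \<subseteq> Y j" "star_trace_at (F j) W w0"
proof -
  have w0: "w0 \<in> W" using star unfolding star_trace_at_def by blast
  then obtain x0 where "x0 \<in> W - {w0}" using nontrivial by blast
  then obtain j0 f0 where j0: "j0 \<in> J" "f0 \<in> F j0" "f0 \<inter> W = {w0, x0}"
    using star_trace_atD[OF star] by blast
  have w0_j0: "w0 \<in> Y j0" using j0 F by blast
  have edge: "\<exists>f\<in>F j0. f \<inter> W = {w0, x}" if x: "x \<in> W - {w0}" for x
  proof -
    obtain j f where j: "j \<in> J" "f \<in> F j" "f \<inter> W = {w0, x}"
      using star_trace_atD[OF star x] by blast
    then have "w0 \<in> Y j" using F by blast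
    then have "j = j0" using disjoint_family_onD[OF disj j(1) j0(1)] w0_j0 by blast
    then show ?thesis using j by blast
  qed
  have "W \<subseteq> Y j0"
  proof
    fix x assume "x \<in> W"
    show "x \<in> Y j0"
    proof (cases "x = w0")
      case False
      then obtain f where "f \<in> F j0" "f \<inter> W = {w0, x}" using edge \<open>x \<in> W\<close> by blast
      then show ?thesis using F[OF j0(1)] by blast
    qed (use w0_j0 in simp)
  qed
  moreover have "star_trace_at (F j0) W w0" unfolding star_trace_at_def using edge w0 by simp
  ultimately show thesis using that j0(1) by blast
qed

lemma star_edge_in_small_block:
  assumes Y: "finite Y" "card Y \<le> r + t - 1" and W: "W \<subseteq> Y" "card W = Suc t"
    and f: "f \<subseteq> Y" "card f = r" "f \<inter> W = {w0, x}"
  shows "card Y = r + t - 1" and "f = insert w0 (insert x (Y - W))"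
proof -
  let ?T = "insert w0 (insert x (Y - W))"
  have fT: "f \<subseteq> ?T" using f by blast
  have finT: "finite ?T" using Y by simp
  have "card W \<le> card Y" using W Y by (intro card_mono)
  moreover have "card ?T \<le> card (Y - W) + 2" using Y by (simp add: card_insert_if)
  moreover have "card (Y - W) = card Y - card W" using W Y by (simp add: card_Diff_subset finite_subset)
  moreover have "r \<le> card ?T" using card_mono[OF finT fT] f(2) by simp
  ultimately show "card Y = r + t - 1" and "f = ?T"
    using Y(2) W(2) f(2) card_seteq[OF finT fT] by linarith+
qed

lemma covering_complement_no_star_trace_at:
  assumes Y: "finite Y" "card Y \<le> r + t - 1"
    and cover: "card Y = r + t - 1 \<Longrightarrow> set_covering Y (r - 1) r D"
    and W: "W \<subseteq> Y" "card W = Suc t" and t: "t \<ge> 1"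
    and star: "star_trace_at ({f. f \<subseteq> Y \<and> card f = r} - D) W w0"
  shows False
proof -
  have edge: "card Y = r + t - 1 \<and> insert w0 (insert x (Y - W)) \<notin> D" if "x \<in> W - {w0}" for x
  proof -
    from star_trace_atD[OF star that]
    obtain f where "f \<in> {f. f \<subseteq> Y \<and> card f = r} - D" "f \<inter> W = {w0, x}" ..
    with star_edge_in_small_block[OF Y W] show ?thesis by auto
  qed
  have w0: "w0 \<in> W" using star unfolding star_trace_at_def by blast
  have "W \<noteq> {w0}" using W(2) t by auto
  then obtain x0 where "x0 \<in> W - {w0}" using w0 by blast
  then have cY: "card Y = r + t - 1" using edge by blast
  then have D: "\<forall>B\<in>D. B \<subseteq> Y \<and> card B = r"
    and covers: "\<And>S. S \<subseteq> Y \<Longrightarrow> card S = r - 1 \<Longrightarrow> \<exists>B\<in>D. S \<subseteq> B"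
    using cover unfolding set_covering_def by blast+
  \<comment> \<open>S is covered by a block of D, which is then the forced edge of the leaf it contains.\<close>
  define S where "S = insert w0 (Y - W)"
  have SY: "S \<subseteq> Y" and finS: "finite S" using W w0 Y unfolding S_def by auto
  have "card W \<le> card Y" using W Y by (intro card_mono)
  moreover have "card (Y - W) = card Y - card W" using W Y by (simp add: card_Diff_subset finite_subset)
  ultimately have cS: "card S = r - 1" and r: "r \<ge> 2"
    using Y cY W(2) w0 unfolding S_def by simp_all
  obtain B where B: "B \<in> D" "S \<subseteq> B" using covers[OF SY cS] by blast
  have BY: "B \<subseteq> Y" and cB: "card B = r" using D B(1) by auto
  have "\<not> B \<subseteq> S" using card_mono[OF finS, of B] cB cS r by linarith
  then obtain x where x: "x \<in> B" "x \<notin> S" by blast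
  then have xW: "x \<in> W - {w0}" using BY unfolding S_def by blast
  have "insert x S \<subseteq> B" using B(2) x(1) by blast
  moreover have "card B \<le> card (insert x S)" using x(2) finS cS cB r by simp
  ultimately have "insert x S = B" using card_seteq[OF finite_subset[OF BY Y(1)]] by simp
  moreover have "insert w0 (insert x (Y - W)) = insert x S" unfolding S_def by blast
  ultimately show False using edge[OF xW] B(1) by simp
qed

lemma no_star_trace_in_covering_complements:
  fixes Y :: "'i \<Rightarrow> 'a set" and D :: "'i \<Rightarrow> 'a set set"
  assumes disj: "disjoint_family_on Y J" and t: "t \<ge> 1"
    and Y: "\<And>j. j \<in> J \<Longrightarrow> finite (Y j) \<and> card (Y j) \<le> r + t - 1"
    and cover: "\<And>j. j \<in> J \<Longrightarrow> card (Y j) = r + t - 1 \<Longrightarrow> set_covering (Y j) (r - 1) r (D j)"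
  shows "\<not> contains_trace V (\<Union>j\<in>J. {f. f \<subseteq> Y j \<and> card f = r} - D j) (star_V t) (star_E t)"
proof
  assume "contains_trace V (\<Union>j\<in>J. {f. f \<subseteq> Y j \<and> card f = r} - D j) (star_V t) (star_E t)"
  then obtain W w0 where W: "card W = Suc t"
    and star: "star_trace_at (\<Union>j\<in>J. {f. f \<subseteq> Y j \<and> card f = r} - D j) W w0"
    by (rule contains_star_trace_imp_star_trace_at)
  have "W \<noteq> {w0}" using W t by auto
  then obtain j where "j \<in> J" "W \<subseteq> Y j" "star_trace_at ({f. f \<subseteq> Y j \<and> card f = r} - D j) W w0"
    using star_trace_at_UN[OF disj _ star] by blast
  then show False
    using covering_complement_no_star_trace_at[of "Y j" r t "D j" W w0] Y cover W t by blast
qed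

lemma disjoint_family_on_blocks:
  fixes m :: nat
  assumes "\<And>j. j \<in> J \<Longrightarrow> k j \<le> m"
  shows "disjoint_family_on (\<lambda>j. {j * m..<j * m + k j}) J"
proof -
  have "v div m = j" if "j \<in> J" "v \<in> {j * m..<j * m + k j}" for v j
    using that assms[of j] by (intro div_nat_eqI) (auto simp: mult.commute)
  then show ?thesis unfolding disjoint_family_on_def by blast
qed

lemma mult_add_self_le_of_less:
  fixes m :: nat
  assumes "j < a"
  shows "j * m + m \<le> a * m"
  using assms by (metis Suc_leI mult_Suc mult_le_mono1 add.commute)

lemma card_subsets_Diff_ge:
  assumes "finite Y" "finite D"
  shows "int (card Y choose r) - int (card D) \<le> int (card ({f. f \<subseteq> Y \<and> card f = r} - D))"
  using diff_card_le_card_Diff[OF assms(2), of "{f. f \<subseteq> Y \<and> card f = r}"] n_subsets[OF assms(1), of r]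
  by linarith

lemma card_UN_subsets_Diff:
  assumes disj: "disjoint_family_on Y J" and "finite J" and "\<And>j. j \<in> J \<Longrightarrow> finite (Y j)"
    and r: "r \<ge> 1"
  shows "card (\<Union>j\<in>J. {f. f \<subseteq> Y j \<and> card f = r} - D j)
           = (\<Sum>j\<in>J. card ({f. f \<subseteq> Y j \<and> card f = r} - D j))"
proof (rule card_UN_disjoint')
  show "disjoint_family_on (\<lambda>j. {f. f \<subseteq> Y j \<and> card f = r} - D j) J"
    unfolding disjoint_family_on_def
  proof (intro ballI impI)
    fix i j assume ij: "i \<in> J" "j \<in> J" "i \<noteq> j"
    show "({f. f \<subseteq> Y i \<and> card f = r} - D i) \<inter> ({f. f \<subseteq> Y j \<and> card f = r} - D j) = {}"
    proof (rule equals0I)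
      fix f assume "f \<in> ({f. f \<subseteq> Y i \<and> card f = r} - D i) \<inter> ({f. f \<subseteq> Y j \<and> card f = r} - D j)"
      then have "f \<subseteq> Y i \<inter> Y j" "card f = r" by auto
      then have "card f = 0" "card f = r" using disjoint_family_onD[OF disj ij] by auto
      then show False using r by simp
    qed
  qed
qed (use assms in auto)

lemma sum_subsets_Diff_le_card_UN:
  assumes "disjoint_family_on Y J" and "finite J"
    and "\<And>j. j \<in> J \<Longrightarrow> finite (Y j)" and "\<And>j. j \<in> J \<Longrightarrow> finite (D j)" and "r \<ge> 1"
  shows "(\<Sum>j\<in>J. int (card (Y j) choose r) - int (card (D j)))
           \<le> int (card (\<Union>j\<in>J. {f. f \<subseteq> Y j \<and> card f = r} - D j))"
proof -
  have "(\<Sum>j\<in>J. int (card (Y j) choose r) - int (card (D j)))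
        \<le> (\<Sum>j\<in>J. int (card ({f. f \<subseteq> Y j \<and> card f = r} - D j)))"
    using assms(3,4) card_subsets_Diff_ge by (intro sum_mono) blast
  also have "\<dots> = int (card (\<Union>j\<in>J. {f. f \<subseteq> Y j \<and> card f = r} - D j))"
    using card_UN_subsets_Diff[OF assms(1-3,5), of D] by (simp add: of_nat_sum)
  finally show ?thesis .
qed

lemma card_le_ex_trace:
  assumes "uniform_hypergraph r n H" "\<not> contains_trace {0..<n} H VF EF"
  shows "card H \<le> ex_trace r n VF EF"
proof -
  let ?S = "{card H | H. uniform_hypergraph r n H \<and> \<not> contains_trace {0..<n} H VF EF}"
  have "?S \<subseteq> card ` Pow (Pow {0..<n})" unfolding uniform_hypergraph_def by blast
  then have "finite ?S" by (rule finite_subset) simp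
  moreover have "card H \<in> ?S" using assms by blast
  ultimately show ?thesis unfolding ex_trace_def by (rule Max_ge)
qed

lemma ex_trace_star_ge_covering_complements:
  assumes r: "r \<ge> 1" and t: "t \<ge> 1" and m: "m = r + t - 1" and b: "b < m" and n: "n = a * m + b"
    and cover: "set_covering {0..<m} (r - 1) r D"
  shows "int a * (int (m choose r) - int (card D)) + int (b choose r)
           \<le> int (ex_trace r n (star_V t) (star_E t))"
proof -
  define k where "k j = (if j < a then m else b)" for j
  define Y where "Y j = {j * m..<j * m + k j}" for j
  define DY where "DY j = (if j < a then (`) ((+) (j * m)) ` D else {})" for j
  define H where "H = (\<Union>j\<in>{..a}. {f. f \<subseteq> Y j \<and> card f = r} - DY j)"
  have km: "k j \<le> m" for j using b unfolding k_def by simp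
  have disj: "disjoint_family_on Y {..a}" unfolding Y_def using km by (rule disjoint_family_on_blocks)
  have finY: "finite (Y j)" and cardY: "card (Y j) = k j" for j unfolding Y_def by simp_all
  have "D \<subseteq> Pow {0..<m}" using cover unfolding set_covering_def by blast
  then have "finite D" by (rule finite_subset) simp
  then have finDY: "finite (DY j)" and cardDY: "card (DY j) \<le> card D" for j
    unfolding DY_def by (simp_all add: card_image_le)
  have coverY: "set_covering (Y j) (r - 1) r (DY j)" if "j < a" for j
  proof -
    have "bij_betw ((+) (j * m)) {0..<m} (Y j)"
      using that unfolding Y_def k_def by (simp add: bij_betw_def add.commute)
    from set_covering_image[OF this cover] show ?thesis using that unfolding DY_def by simp
  qed
  have free: "\<not> contains_trace {0..<n} H (star_V t) (star_E t)"
    unfolding H_def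
  proof (rule no_star_trace_in_covering_complements[OF disj t])
    show "finite (Y j) \<and> card (Y j) \<le> r + t - 1" for j using finY cardY km m by simp
    show "set_covering (Y j) (r - 1) r (DY j)" if "card (Y j) = r + t - 1" for j
      using that coverY cardY b m unfolding k_def by (cases "j < a") auto
  qed
  have "Y j \<subseteq> {0..<n}" if "j \<le> a" for j
    using that mult_add_self_le_of_less[of j a m] n unfolding Y_def k_def by (cases "j < a") auto
  then have uniform: "uniform_hypergraph r n H" unfolding uniform_hypergraph_def H_def by blast
  have "(\<Sum>j<a. int (m choose r) - int (card D))
        \<le> (\<Sum>j<a. int (card (Y j) choose r) - int (card (DY j)))"
    using cardDY by (intro sum_mono) (simp add: cardY k_def)
  then have "int a * (int (m choose r) - int (card D)) + int (b choose r)
             \<le> (\<Sum>j\<in>{..a}. int (card (Y j) choose r) - int (card (DY j)))"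
    by (simp add: lessThan_Suc_atMost[symmetric] cardY k_def DY_def)
  also have "\<dots> \<le> int (card H)"
    unfolding H_def using disj finY finDY r by (intro sum_subsets_Diff_le_card_UN) auto
  also have "\<dots> \<le> int (ex_trace r n (star_V t) (star_E t))"
    using card_le_ex_trace[OF uniform free] by simp
  finally show ?thesis .
qed

theorem mainTheorem1:
  fixes r t n a b c :: nat
  assumes "r \<ge> 2" and "t \<ge> 2"
    and "n = a * (r + t - 1) + b" and "b \<le> r + t - 2"
    and "\<exists>(X :: nat set) C. finite X \<and> card X = r + t - 1 \<and>
            is_minimal_covering X (r - 1) r 1 C \<and> size C = c"
  shows "int a * (int ((r + t - 1) choose r) - int c) + int (b choose r)
           \<le> int (ex_trace r n (star_V t) (star_E t))"
proof -
  obtain X :: "nat set" and C where X: "finite X" "card X = r + t - 1"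
    and C: "is_minimal_covering X (r - 1) r 1 C" and c: "size C = c"
    using assms(5) by blast
  have cover: "set_covering X (r - 1) r (set_mset C)"
    using C is_covering_imp_set_covering unfolding is_minimal_covering_def by blast
  obtain g where g: "bij_betw g X {0..<r + t - 1}"
    using finite_same_card_bij[OF X(1), of "{0..<r + t - 1}"] X(2) by auto
  define D where "D = (`) g ` set_mset C"
  have "card D \<le> c"
    unfolding D_def using card_image_le[of "set_mset C" "(`) g"] card_set_mset_le_size[of C] c by simp
  then have "int a * (int ((r + t - 1) choose r) - int c)
             \<le> int a * (int ((r + t - 1) choose r) - int (card D))"
    by (intro mult_left_mono) auto
  moreover have "int a * (int ((r + t - 1) choose r) - int (card D)) + int (b choose r)
                  \<le> int (ex_trace r n (star_V t) (star_E t))"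
    using assms(1-4) set_covering_image[OF g cover] unfolding D_def
    by (intro ex_trace_star_ge_covering_complements) auto
  ultimately show ?thesis by linarith
qed

end
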